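(* Let $p,q$ be positive integers, $\mathbf{C}=\begin{bmatrix}1 & p\\ q & 1+pq\end{bmatrix}$, $A=pq+2$, $B=\sqrt{A^2-4}$, and $G_n=\left(\frac{A+B}{2}\right)^n+\left(\frac{A-B}{2}\right)^n$, $H_n=\frac{1}{B}\left(\left(\frac{A+B}{2}\right)^n-\left(\frac{A-B}{2}\right)^n\right)$. Then for every positive integer $n$, $$\mathbf{C}^{-n}=\begin{bmatrix}\frac12 G_n+\frac{A-2}{2}H_n & -p\,H_n\\ -q\,H_n & \frac12 G_n-\frac{A-2}{2}H_n\end{bmatrix}.$$ *)

theory Defs
  imports "HOL-Analysis.Analysis"
begin

primrec matpow :: "real^'n^'n \<Rightarrow> nat \<Rightarrow> real^'n^'n" where
  "matpow M 0 = mat 1"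
| "matpow M (Suc k) = matpow M k ** M"

end

theory Submission
  imports Defs
begin

(*
  The inverse D of C has trace A and determinant 1, so by Cayley-Hamilton D^2 = A D - 1, whose
  characteristic roots are a, b = (A +- B)/2. A matrix annihilated by (X - a)(X - b) with a ~= b
  has the Binet-type powers M^k = u_k M + c_k with u_k = (a^k - b^k)/(a - b); here u_n = H_n and
  c_n = G_n/2 - A H_n/2, and the claimed entries are those of H_n D + c_n (for every n, also 0).
*)

lemma mat2_eq_iff:
  "(M::'a^2^2) = N \<longleftrightarrow>
     M$1$1 = N$1$1 \<and> M$1$2 = N$1$2 \<and> M$2$1 = N$2$1 \<and> M$2$2 = N$2$2"
  by (auto simp: vec_eq_iff forall_2)

lemma matrix_inv_eq:
  fixes M N :: "'a::semiring_1^'n^'n"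
  assumes "M ** N = mat 1" and "N ** M = mat 1"
  shows "matrix_inv M = N"
proof -
  have inv: "M ** matrix_inv M = mat 1 \<and> matrix_inv M ** M = mat 1"
    unfolding matrix_inv_def by (rule someI[of _ N]) (use assms in auto)
  have "matrix_inv M = matrix_inv M ** (M ** N)" using assms by simp
  also have "\<dots> = (matrix_inv M ** M) ** N" by (simp add: matrix_mul_assoc)
  finally show ?thesis using inv by simp
qed

lemma matrix_add_rdistrib: "(A + B) ** C = A ** C + B ** C"
  by (vector matrix_matrix_mult_def sum.distrib[symmetric] field_simps)

lemma cayley_hamilton_2:
  fixes M :: "real^2^2"
  shows "M ** M = trace M *\<^sub>R M - det M *\<^sub>R mat 1"
  by (simp add: mat2_eq_iff matrix_matrix_mult_def sum_2 trace_def UNIV_2 det_2 mat_def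
      algebra_simps)

lemma matpow_eq_if_quadratic:
  fixes M :: "real^'n^'n"
  assumes quadratic: "M ** M = (a + b) *\<^sub>R M - (a * b) *\<^sub>R mat 1" and "a \<noteq> b"
  shows "matpow M k =
    ((a^k - b^k) / (a - b)) *\<^sub>R M + ((a * b^k - b * a^k) / (a - b)) *\<^sub>R mat 1"
proof (induction k)
  case 0
  then show ?case using \<open>a \<noteq> b\<close> by simp
next
  case (Suc k)
  define u where "u = (a^k - b^k) / (a - b)"
  define c where "c = (a * b^k - b * a^k) / (a - b)"
  have u_Suc: "u * (a + b) + c = (a^Suc k - b^Suc k) / (a - b)"
    using \<open>a \<noteq> b\<close> unfolding u_def c_def
    by (simp add: divide_simps) (simp add: algebra_simps)
  have c_Suc: "- (u * (a * b)) = (a * b^Suc k - b * a^Suc k) / (a - b)"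
    using \<open>a \<noteq> b\<close> unfolding u_def by (simp add: divide_simps) (simp add: algebra_simps)
  have "matpow M (Suc k) = (u *\<^sub>R M + c *\<^sub>R mat 1) ** M"
    using Suc by (simp add: u_def c_def)
  also have "\<dots> = u *\<^sub>R (M ** M) + c *\<^sub>R M"
    by (simp add: matrix_add_rdistrib flip: scalar_matrix_assoc)
  also have "\<dots> = (u * (a + b) + c) *\<^sub>R M + (- (u * (a * b))) *\<^sub>R mat 1"
    by (simp add: quadratic algebra_simps)
  finally show ?case by (simp only: u_Suc c_Suc)
qed

theorem proposition2:
  fixes p q n :: nat
  assumes "p > 0" and "q > 0" and "n > 0"
  defines "C \<equiv> (vector [vector [1, real p], vector [real q, 1 + real p * real q]] :: real^2^2)"
      and "A \<equiv> real p * real q + 2"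
  defines "B \<equiv> sqrt (A^2 - 4)"
  defines "G \<equiv> (\<lambda>k::nat. ((A + B) / 2) ^ k + ((A - B) / 2) ^ k)"
      and "H \<equiv> (\<lambda>k::nat. (1 / B) * (((A + B) / 2) ^ k - ((A - B) / 2) ^ k))"
  shows "matpow (matrix_inv C) n =
    (vector [vector [G n / 2 + (A - 2) / 2 * H n, - real p * H n],
             vector [- real q * H n, G n / 2 - (A - 2) / 2 * H n]] :: real^2^2)"
proof -
  define D where
    "D = (vector [vector [1 + real p * real q, - real p], vector [- real q, 1]] :: real^2^2)"
  define a b where "a = (A + B) / 2" and "b = (A - B) / 2"
  have "matrix_inv C = D"
    by (rule matrix_inv_eq)
      (simp_all add: mat2_eq_iff C_def D_def matrix_matrix_mult_def sum_2 mat_def algebra_simps)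
  have "0 < real p * real q" using assms(1,2) by simp
  then have "0 < (real p * real q) * (real p * real q + 4)" by simp
  then have "0 < A^2 - 4" by (simp add: A_def power2_eq_square algebra_simps)
  then have B_sq: "B^2 = A^2 - 4" and "B \<noteq> 0" by (simp_all add: B_def)
  have D_quadratic: "D ** D = (a + b) *\<^sub>R D - (a * b) *\<^sub>R mat 1"
  proof -
    have "a + b = trace D" "a * b = det D"
      using B_sq by (simp_all add: a_def b_def D_def A_def trace_def UNIV_2 det_2
        field_simps power2_eq_square)
    then show ?thesis by (simp add: cayley_hamilton_2)
  qed
  have "a \<noteq> b" using \<open>B \<noteq> 0\<close> by (simp add: a_def b_def)
  moreover have "H n = (a^n - b^n) / (a - b)"
    and "(a * b^n - b * a^n) / (a - b) = G n / 2 - A / 2 * H n"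
    using \<open>B \<noteq> 0\<close> by (simp_all add: H_def G_def a_def b_def divide_simps)
      (simp_all add: algebra_simps)
  ultimately have
    "matpow (matrix_inv C) n = H n *\<^sub>R D + (G n / 2 - A / 2 * H n) *\<^sub>R mat 1"
    using matpow_eq_if_quadratic[OF D_quadratic] \<open>matrix_inv C = D\<close> by metis
  also have "\<dots> = vector [vector [G n / 2 + (A - 2) / 2 * H n, - real p * H n],
                            vector [- real q * H n, G n / 2 - (A - 2) / 2 * H n]]"
    by (simp add: mat2_eq_iff D_def mat_def A_def field_simps)
  finally show ?thesis .
qed

end
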